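(* Consider the sampling rule of F-TaS (described in the context), run indefinitely on the $K$-armed unit-variance Gaussian bandit with $\theta\in\Theta$. Let $\alpha>0$, $\varepsilon>0$, and for $T\ge1$ let $C_T(\varepsilon)=\bigcap_{t=\lceil T^{1/4}\rceil}^{T}\{\|\hat\theta(t)-\theta\|_\infty\le\varepsilon\}$. Then there exists a constant $B_\varepsilon>0$ depending on $\varepsilon$ such that for all $T\ge1$, $$\mathbb{P}_\theta\big(\overline{C_T(\varepsilon)}\big)\le\frac{1}{T^\alpha}+2B_\varepsilon KT\exp\left(-2\left\lfloor\frac{p_0^{1/4}T^{1/16}}{\sqrt{\ln(1+K'T^\alpha)}}\right\rfloor\varepsilon^2\right),$$ where for pre-specified rates $K'=2\max(K_0,K-K_0)$ and $p_0=\min\big((1-p_{\rm sum})/(2K_0),\ \min_{a:p_a>0}p_a\big)$, and for $\theta$-dependent rates $p_0=1/(2K)$ and $K'=K$.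
   Context: Bandit model: arms $[K]$, unknown $\theta\in\Theta:=\{\theta\in\mathbb{R}^K:\arg\max_a\theta_a\text{ unique}\}$, reward $r_t\sim\mathcal N(\theta_{a_t},1)$; $\hat\theta(t)$ the vector of empirical means after $t$ rounds. Fairness rates: pre-specified $p\in[0,1]^K$ with $p_{\rm sum}=\sum_ap_a\le1$, $K_0=|\{a:p_a=0\}|$ (in $p_0$, the term $(1-p_{\rm sum})/(2K_0)$ is read as $+\infty$ when $K_0=0$), or continuous $p:\mathbb{R}^K\to[0,1]^K$ with sum at most $1$. $\Sigma_p=\{w\in[0,1]^K:w\ge p,\sum_aw_a=1\}$; for a parameter $\lambda$ with unique best arm $a^\star_\lambda$ and gaps $\Delta_a(\lambda)$, $w^\star_p(\lambda)\in\arg\min_{w\in\Sigma_p}\max_{a\ne a^\star_\lambda}(w_a^{-1}+w_{a^\star_\lambda}^{-1})/\Delta_a(\lambda)^2$ (with $p=p(\lambda)$ in the $\theta$-dependent case). F-TaS sampling rule: $\epsilon_t=1/(2\sqrt t)$; pre-specified case: if $K_0=0$, $\pi_{c,a}=p_a+(1-p_{\rm sum})/K$; otherwise $\pi_{c,a}=p_a$ if $p_a>0$ and $(1-p_{\rm sum})/K_0$ if $p_a=0$; $\theta$-dependent case: $\pi_{c,a}=1/K$. At round $t$, $a_t\sim\pi(t)=(1-\epsilon_t)w^\star_p(\hat\theta)+\epsilon_t\pi_c$, $\hat\theta$ the current empirical means (fixed convention when undefined). *)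

theory Defs
  imports "HOL-Probability.Probability"
begin

(* Arms are the elements of a finite linearly ordered type 'k, so K = CARD('k).
   Parameter vectors, weights and rates are elements of real^'k. *)

definition unique_best :: "real^'k \<Rightarrow> bool" where
  "unique_best l \<longleftrightarrow> (\<exists>a. \<forall>b. b \<noteq> a \<longrightarrow> l$b < l$a)"

definition best_arm :: "real^'k \<Rightarrow> 'k" where
  "best_arm l = (THE a. \<forall>b. b \<noteq> a \<longrightarrow> l$b < l$a)"

definition gap :: "real^'k \<Rightarrow> 'k \<Rightarrow> real" where
  "gap l a = l$(best_arm l) - l$a"

definition Sigma_p :: "real^'k \<Rightarrow> (real^'k) set" where
  "Sigma_p p = {w. (\<forall>a. p$a \<le> w$a \<and> w$a \<le> 1) \<and> (\<Sum>a\<in>UNIV. w$a) = 1}"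

definition wobj :: "real^'k \<Rightarrow> real^'k \<Rightarrow> ereal" where
  "wobj l w = (SUP a\<in>{a. a \<noteq> best_arm l}.
      (if w$a > 0 \<and> w$(best_arm l) > 0
       then ereal ((1 / w$a + 1 / w$(best_arm l)) / (gap l a)\<^sup>2)
       else \<infinity>))"

definition is_wstar :: "real^'k \<Rightarrow> real^'k \<Rightarrow> real^'k \<Rightarrow> bool" where
  "is_wstar p l w \<longleftrightarrow> w \<in> Sigma_p p \<and> (\<forall>v\<in>Sigma_p p. wobj l w \<le> wobj l v)"

definition wstar_selection :: "(real^'k \<Rightarrow> real^'k) \<Rightarrow> (real^'k \<Rightarrow> real^'k) \<Rightarrow> bool" where
  "wstar_selection prule sel \<longleftrightarrow>
     (\<forall>l. sel l \<in> Sigma_p (prule l) \<and> (unique_best l \<longrightarrow> is_wstar (prule l) l (sel l)))"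

definition K0 :: "real^'k \<Rightarrow> nat" where
  "K0 p = card {a. p$a = 0}"

definition psum :: "real^'k \<Rightarrow> real" where
  "psum p = (\<Sum>a\<in>UNIV. p$a)"

definition pic_pre :: "real^'k \<Rightarrow> real^'k" where
  "pic_pre p = (if K0 p = 0 then (\<chi> a. p$a + (1 - psum p) / real CARD('k))
                else (\<chi> a. if p$a > 0 then p$a else (1 - psum p) / real (K0 p)))"

text \<open>p_0 = min((1-p_sum)/(2K_0), min_{a: p_a>0} p_a), a term being +infinity if its
  index set is empty (K_0 = 0, resp. no arm with p_a > 0).\<close>
definition p0_pre :: "real^'k \<Rightarrow> real" where
  "p0_pre p = (if K0 p = 0 then Min {p$a | a. p$a > 0}
               else if {a. p$a > 0} = {} then (1 - psum p) / (2 * real (K0 p))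
               else min ((1 - psum p) / (2 * real (K0 p))) (Min {p$a | a. p$a > 0}))"

definition Kprime_pre :: "real^'k \<Rightarrow> nat" where
  "Kprime_pre p = 2 * max (K0 p) (CARD('k) - K0 p)"

text \<open>The two fairness settings. prule maps a parameter lambda to the rate vector p(lambda).\<close>
definition fair_setting ::
  "(real^'k \<Rightarrow> real^'k) \<Rightarrow> real^'k \<Rightarrow> real \<Rightarrow> nat \<Rightarrow> bool" where
  "fair_setting prule pic p0 K' \<longleftrightarrow>
     (\<exists>p. (\<forall>a. 0 \<le> p$a \<and> p$a \<le> 1) \<and> psum p \<le> 1 \<and> prule = (\<lambda>_. p)
          \<and> pic = pic_pre p \<and> p0 = p0_pre p \<and> K' = Kprime_pre p)
   \<or> (continuous_on UNIV prule \<and> (\<forall>l a. 0 \<le> prule l $ a \<and> prule l $ a \<le> 1)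
          \<and> (\<forall>l. psum (prule l) \<le> 1)
          \<and> pic = (\<chi> a. 1 / real CARD('k)) \<and> p0 = 1 / (2 * real CARD('k)) \<and> K' = CARD('k))"

text \<open>Bandit environment in the reward-table model: X a n is the reward of the (n+1)-th pull
  of arm a, distributed N(theta_a, 1); U t is the uniform [0,1] randomisation used at round t;
  all of these are mutually independent.\<close>
definition bandit_env ::
  "'w measure \<Rightarrow> real^'k \<Rightarrow> ('k \<Rightarrow> nat \<Rightarrow> 'w \<Rightarrow> real) \<Rightarrow> (nat \<Rightarrow> 'w \<Rightarrow> real) \<Rightarrow> bool" where
  "bandit_env M \<theta> X U \<longleftrightarrow> prob_space M
     \<and> (\<forall>a n. distributed M lborel (X a n) (\<lambda>x. ennreal (normal_density (\<theta>$a) 1 x)))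
     \<and> (\<forall>t. distributed M lborel (U t) (indicator {0..1}))
     \<and> prob_space.indep_vars M (\<lambda>_. borel)
          (\<lambda>i. case i of Inl (a, n) \<Rightarrow> X a n | Inr t \<Rightarrow> U t) UNIV"

definition emp_mean :: "('k \<Rightarrow> nat \<Rightarrow> real) \<Rightarrow> real^'k \<Rightarrow> ('k \<Rightarrow> nat) \<Rightarrow> real^'k" where
  "emp_mean x dflt N = (\<chi> a. if N a = 0 then dflt$a else (\<Sum>n<N a. x a n) / real (N a))"

text \<open>Sampling an arm from distribution pi with a uniform u (inverse CDF).\<close>
definition draw_arm :: "(real, 'k::{finite,linorder}) vec \<Rightarrow> real \<Rightarrow> 'k" where
  "draw_arm \<pi> u = (LEAST a. u < (\<Sum>b\<in>{..a}. \<pi>$b))"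

definition eps_t :: "nat \<Rightarrow> real" where
  "eps_t t = 1 / (2 * sqrt (real t))"

definition ftas_pi :: "(real^'k \<Rightarrow> real^'k) \<Rightarrow> real^'k \<Rightarrow> nat \<Rightarrow> real^'k \<Rightarrow> real^'k" where
  "ftas_pi sel pic t \<theta>h = (1 - eps_t t) *\<^sub>R sel \<theta>h + eps_t t *\<^sub>R pic"

text \<open>Pull counts N_a(t) after t rounds (rounds 1,2,...).\<close>
primrec ftas_counts ::
  "((real, 'k::{finite,linorder}) vec \<Rightarrow> (real, 'k) vec) \<Rightarrow> (real, 'k) vec \<Rightarrow> (real, 'k) vec \<Rightarrow> ('k \<Rightarrow> nat \<Rightarrow> real)
     \<Rightarrow> (nat \<Rightarrow> real) \<Rightarrow> nat \<Rightarrow> ('k \<Rightarrow> nat)" where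
  "ftas_counts sel pic dflt x u 0 = (\<lambda>a. 0)"
| "ftas_counts sel pic dflt x u (Suc t) =
     (let N = ftas_counts sel pic dflt x u t;
          a = draw_arm (ftas_pi sel pic (Suc t) (emp_mean x dflt N)) (u (Suc t))
      in N(a := Suc (N a)))"

definition ftas_emp ::
  "((real, 'k::{finite,linorder}) vec \<Rightarrow> (real, 'k) vec) \<Rightarrow> (real, 'k) vec \<Rightarrow> (real, 'k) vec
     \<Rightarrow> ('k \<Rightarrow> nat \<Rightarrow> 'w \<Rightarrow> real) \<Rightarrow> (nat \<Rightarrow> 'w \<Rightarrow> real) \<Rightarrow> 'w \<Rightarrow> nat \<Rightarrow> (real, 'k) vec" where
  "ftas_emp sel pic dflt X U \<omega> t =
     emp_mean (\<lambda>a n. X a n \<omega>) dflt (ftas_counts sel pic dflt (\<lambda>a n. X a n \<omega>) (\<lambda>s. U s \<omega>) t)"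

definition sup_norm :: "real^'k \<Rightarrow> real" where
  "sup_norm v = Max (range (\<lambda>a. \<bar>v$a\<bar>))"

end

(*
  Let d = floor (T^(1/16)) and t0 = ceil (T^(1/4)) >= d^4.  Because of the forced exploration
  component, every round r <= t0 plays each arm with probability at least p0 * eps_t r, which is
  at least q = p0 / (2 (d + 1)^2).  Cutting the first d^4 rounds into d blocks of d^3 rounds, an
  arm ends up with fewer than d pulls at time t0 only if some block misses it, which has
  probability at most d (1 - q)^(d^3) <= d exp (-p0 d / 8).  Outside that event, every empirical
  mean at a time t in [t0, T] is the average of n in [d, T] independent N(theta_a, 1) rewards,
  and Markov's inequality for the 2k-th central moment bounds its deviation probability by
  C_k / (n eps^2)^k.  For k > 16 alpha + 16 both contributions are o(T^(-alpha)), so the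
  failure probability is at most T^(-alpha) for all large T; the finitely many remaining T
  are absorbed into the constant B.
*)
theory Submission
  imports Defs "HOL-Real_Asymp.Real_Asymp"
begin

section \<open>Independence, Gaussian moments and growth rates\<close>

lemma borel_measurable_vecI:
  fixes f :: "'a \<Rightarrow> real^'k"
  assumes "\<And>i. (\<lambda>x. f x $ i) \<in> borel_measurable M"
  shows "f \<in> borel_measurable M"
proof (subst borel_measurable_euclidean_space, intro ballI)
  fix b :: "real^'k" assume "b \<in> Basis"
  then obtain i where b: "b = axis i 1" by (auto simp: Basis_vec_def)
  show "(\<lambda>x. f x \<bullet> b) \<in> borel_measurable M"
    using assms[of i] by (simp add: b cart_eq_inner_axis[symmetric])
qed

lemma borel_measurable_vec_nth[measurable]:
  fixes f :: "'a \<Rightarrow> real^'k"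
  assumes "f \<in> borel_measurable M"
  shows "(\<lambda>x. f x $ i) \<in> borel_measurable M"
  using measurable_compose[OF assms borel_measurable_nth] by simp

lemma one_minus_power_le_exp:
  fixes q :: real
  assumes "q \<le> 1"
  shows "(1 - q) ^ n \<le> exp (- (q * n))"
proof (cases "n = 0")
  case False
  then show ?thesis
    using exp_ge_one_minus_x_over_n_power_n[of "q * n" n] assms by simp
qed simp

lemma mono_block_stall:
  fixes N :: "nat \<Rightarrow> nat"
  assumes "mono N" and "d * L \<le> t" and "N t < N 0 + d"
  shows "\<exists>j<d. N (j * L + L) = N (j * L)"
proof (rule ccontr)
  assume none: "\<not> ?thesis"
  have grow: "N (j * L) < N (j * L + L)" if "j < d" for j
  proof -
    have "N (j * L) \<le> N (j * L + L)" by (rule monoD[OF \<open>mono N\<close>]) simp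
    moreover have "N (j * L + L) \<noteq> N (j * L)" using that none by blast
    ultimately show ?thesis by simp
  qed
  have "N 0 + j \<le> N (j * L)" if "j \<le> d" for j
    using that
  proof (induction j)
    case (Suc j)
    then show ?case using grow[of j] by (simp add: add.commute)
  qed simp
  then have "N 0 + d \<le> N t"
    using monoD[OF \<open>mono N\<close> \<open>d * L \<le> t\<close>] by (meson order.refl order.trans)
  with \<open>N t < N 0 + d\<close> show False by simp
qed

lemma root16_floor_bounds:
  fixes T :: nat
  assumes T: "1 \<le> T"
  defines "d \<equiv> nat \<lfloor>real T powr (1/16)\<rfloor>"
  shows "1 \<le> d" and "d ^ 4 \<le> nat \<lceil>real T powr (1/4)\<rceil>" and "nat \<lceil>real T powr (1/4)\<rceil> \<le> (d + 1) ^ 4"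
    and "real T \<le> (real d + 1) ^ 16"
proof -
  have T1: "1 \<le> real T" using T by simp
  then have r1: "1 \<le> real T powr (1/16)" by (simp add: ge_one_powr_ge_zero)
  have d_le: "real d \<le> real T powr (1/16)" and d_gt: "real T powr (1/16) < real d + 1"
    unfolding d_def using r1 by linarith+
  have pow4: "(real T powr (1/16)) ^ 4 = real T powr (1/4)"
    and pow16: "(real T powr (1/16)) ^ 16 = real T"
    using T1 by (simp_all add: powr_realpow[symmetric] powr_powr)
  show "1 \<le> d" unfolding d_def using r1 by (simp add: le_nat_floor)
  have "real (d ^ 4) \<le> real T powr (1/4)"
    unfolding pow4[symmetric] of_nat_power using d_le by (intro power_mono) auto
  then have "real (d ^ 4) \<le> real_of_int \<lceil>real T powr (1/4)\<rceil>"
    using le_of_int_ceiling order_trans by blast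
  then show "d ^ 4 \<le> nat \<lceil>real T powr (1/4)\<rceil>"
    by linarith
  have "real T powr (1/4) \<le> (real d + 1) ^ 4"
    unfolding pow4[symmetric] using d_gt r1 by (intro power_mono) auto
  then have "\<lceil>real T powr (1/4)\<rceil> \<le> int ((d + 1) ^ 4)"
    by (simp add: ceiling_le_iff add.commute)
  then show "nat \<lceil>real T powr (1/4)\<rceil> \<le> (d + 1) ^ 4"
    by (simp only: nat_le_iff)
  have "(real T powr (1/16)) ^ 16 \<le> (real d + 1) ^ 16"
    using d_gt r1 by (intro power_mono) auto
  then show "real T \<le> (real d + 1) ^ 16" by (simp only: pow16)
qed

lemma powr_le_powr_of_le_power:
  fixes x y a :: real
  assumes "0 \<le> x" "x \<le> y ^ n" "0 < y" "0 \<le> a"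
  shows "x powr a \<le> y powr (n * a)"
proof -
  have "x powr a \<le> (y ^ n) powr a"
    using assms by (intro powr_mono2) auto
  also have "(y ^ n) powr a = y powr (n * a)"
    using \<open>0 < y\<close> by (simp add: powr_realpow[symmetric] powr_powr)
  finally show ?thesis .
qed

lemma filterlim_nat_floor_root16:
  "filterlim (\<lambda>T::nat. real (nat \<lfloor>real T powr (1/16)\<rfloor>)) at_top sequentially"
proof (rule filterlim_at_top_mono)
  show "filterlim (\<lambda>T::nat. real T powr (1/16) - 1) at_top sequentially"
    by real_asymp
  show "\<forall>\<^sub>F T in sequentially. real T powr (1/16) - 1 \<le> real (nat \<lfloor>real T powr (1/16)\<rfloor>)"
    by (intro always_eventually allI) linarith
qed

lemma bound_absorb_initial_segment:
  fixes h :: "nat \<Rightarrow> real" and N :: nat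
  assumes h: "\<And>T. 1 \<le> T \<Longrightarrow> 0 < h T"
  obtains B where "1 \<le> B" and "\<And>T. 1 \<le> T \<Longrightarrow> T < N \<Longrightarrow> 1 \<le> B * h T"
proof
  define B where "B = 1 + (\<Sum>T\<in>{1..<N}. 1 / h T)"
  have nonneg: "0 \<le> (\<Sum>T\<in>{1..<N}. 1 / h T)"
    using h by (intro sum_nonneg) (simp add: less_imp_le)
  then show "1 \<le> B" by (simp add: B_def)
  fix T assume T: "1 \<le> T" "T < N"
  then have "1 / h T \<le> (\<Sum>T\<in>{1..<N}. 1 / h T)"
    using h by (intro member_le_sum) (auto simp: less_imp_le)
  then have "1 / h T \<le> B" using nonneg by (simp add: B_def)
  then show "1 \<le> B * h T"
    using h[OF T(1)] by (simp add: divide_le_eq)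
qed

lemma (in prob_space) emeasure_indep_pair_le:
  fixes c :: ennreal
  assumes ind: "indep_var N Y N' W" and S: "S \<in> sets (N \<Otimes>\<^sub>M N')" and A: "A \<in> sets N"
    and slice: "\<And>y. y \<in> space N \<Longrightarrow> emeasure (distr M N' W) (Pair y -` S) \<le> c * indicator A y"
  shows "emeasure M {\<omega>\<in>space M. (Y \<omega>, W \<omega>) \<in> S} \<le> c * emeasure M {\<omega>\<in>space M. Y \<omega> \<in> A}"
proof -
  have [measurable]: "Y \<in> measurable M N" "W \<in> measurable M N'"
    and prod: "distr M N Y \<Otimes>\<^sub>M distr M N' W = distr M (N \<Otimes>\<^sub>M N') (\<lambda>x. (Y x, W x))"
    using ind unfolding indep_var_distribution_eq by auto
  interpret W: prob_space "distr M N' W" by (rule prob_space_distr) simp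
  have "emeasure M {\<omega>\<in>space M. (Y \<omega>, W \<omega>) \<in> S} = emeasure (distr M N Y \<Otimes>\<^sub>M distr M N' W) S"
    using S unfolding prod by (subst emeasure_distr) (auto simp: vimage_def Int_def conj_commute)
  also have "\<dots> = (\<integral>\<^sup>+y. emeasure (distr M N' W) (Pair y -` S) \<partial>distr M N Y)"
    using S by (intro W.emeasure_pair_measure_alt) simp
  also have "\<dots> \<le> (\<integral>\<^sup>+y. c * indicator A y \<partial>distr M N Y)"
    using slice by (intro nn_integral_mono) simp
  also have "\<dots> = c * emeasure M {\<omega>\<in>space M. Y \<omega> \<in> A}"
    using A by (simp add: nn_integral_cmult_indicator emeasure_distr vimage_def Int_def conj_commute)
  finally show ?thesis .
qed

(* fact (2 k) / (2^k fact k) = (2 k - 1)!! is the 2k-th moment of the standard normal law. *)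
lemma (in prob_space) prob_normal_deviation_le:
  fixes c \<sigma> \<delta> :: real
  assumes S: "distributed M lborel S (normal_density c \<sigma>)" and \<sigma>: "0 < \<sigma>" and \<delta>: "0 < \<delta>"
  shows "prob {\<omega>\<in>space M. \<delta> < \<bar>S \<omega> - c\<bar>} \<le> fact (2 * k) / (2 ^ k * fact k) * \<sigma> ^ (2 * k) / \<delta> ^ (2 * k)"
proof -
  define u where "u = (\<lambda>x::real. (x - c) ^ (2 * k))"
  have [measurable]: "S \<in> borel_measurable M" using S by (auto dest: distributed_measurable)
  have u: "u \<in> borel_measurable lborel" by (simp add: u_def)
  have nonneg: "0 \<le> normal_density c \<sigma> x" for x by (simp add: normal_density_nonneg)
  have integrable: "integrable M (\<lambda>\<omega>. u (S \<omega>))"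
    using distributed_integrable[OF S u] integrable_normal_moment[OF \<sigma>, of c "2 * k"] nonneg
    by (simp add: u_def)
  have "prob {\<omega>\<in>space M. \<delta> < \<bar>S \<omega> - c\<bar>} \<le> prob {\<omega>\<in>space M. \<delta> ^ (2 * k) \<le> u (S \<omega>)}"
  proof (rule finite_measure_mono)
    show "{\<omega>\<in>space M. \<delta> < \<bar>S \<omega> - c\<bar>} \<subseteq> {\<omega>\<in>space M. \<delta> ^ (2 * k) \<le> u (S \<omega>)}"
    proof safe
      fix \<omega> assume "\<delta> < \<bar>S \<omega> - c\<bar>"
      then have "\<delta> ^ (2 * k) \<le> \<bar>S \<omega> - c\<bar> ^ (2 * k)"
        using \<delta> by (intro power_mono) auto
      then show "\<delta> ^ (2 * k) \<le> u (S \<omega>)" by (simp add: u_def power_even_abs)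
    qed
  qed (simp add: u_def)
  also have "\<dots> \<le> (\<integral>\<omega>. u (S \<omega>) \<partial>M) / \<delta> ^ (2 * k)"
    by (rule integral_Markov_inequality_measure[OF integrable]) (use \<delta> in \<open>auto simp: u_def\<close>)
  also have "(\<integral>\<omega>. u (S \<omega>) \<partial>M) = fact (2 * k) / ((2 / \<sigma>\<^sup>2) ^ k * fact k)"
    using distributed_integral[OF S u] integral_normal_moment_even[OF \<sigma>, of c k] nonneg
    by (simp add: u_def)
  also have "\<dots> = fact (2 * k) / (2 ^ k * fact k) * \<sigma> ^ (2 * k)"
  proof -
    have "(2 / \<sigma>\<^sup>2) ^ k = 2 ^ k / \<sigma> ^ (2 * k)"
      by (simp add: power_divide power_mult)
    then show ?thesis using \<sigma> by simp
  qed
  finally show ?thesis .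
qed

lemma (in prob_space) prob_normal_mean_deviation:
  fixes \<mu> \<epsilon> :: real
  assumes I: "finite I" "I \<noteq> {}" and ind: "indep_vars (\<lambda>_. borel) Z I"
    and normal: "\<And>i. i \<in> I \<Longrightarrow> distributed M lborel (Z i) (normal_density \<mu> 1)"
    and \<epsilon>: "0 < \<epsilon>"
  shows "prob {\<omega>\<in>space M. \<epsilon> < \<bar>(\<Sum>i\<in>I. Z i \<omega>) / card I - \<mu>\<bar>}
    \<le> (fact (2 * k) / (2 ^ k * fact k)) / (card I * \<epsilon>\<^sup>2) ^ k"
proof -
  define n where "n = real (card I)"
  have n: "0 < n" using I by (simp add: n_def card_gt_0_iff)
  have sum: "distributed M lborel (\<lambda>\<omega>. \<Sum>i\<in>I. Z i \<omega>) (normal_density (n * \<mu>) (sqrt n))"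
    using sum_indep_normal[OF I ind, of "\<lambda>_. 1" "\<lambda>_. \<mu>"] normal by (simp add: n_def)
  have "\<epsilon> < \<bar>S / n - \<mu>\<bar> \<longleftrightarrow> n * \<epsilon> < \<bar>S - n * \<mu>\<bar>" for S
  proof -
    have "S / n - \<mu> = (S - n * \<mu>) / n" using n by (simp add: field_simps)
    then show ?thesis using n by (simp add: pos_less_divide_eq mult.commute)
  qed
  then have "prob {\<omega>\<in>space M. \<epsilon> < \<bar>(\<Sum>i\<in>I. Z i \<omega>) / n - \<mu>\<bar>}
      = prob {\<omega>\<in>space M. n * \<epsilon> < \<bar>(\<Sum>i\<in>I. Z i \<omega>) - n * \<mu>\<bar>}"
    by simp
  also have "\<dots> \<le> fact (2 * k) / (2 ^ k * fact k) * sqrt n ^ (2 * k) / (n * \<epsilon>) ^ (2 * k)"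
    using n \<epsilon> by (intro prob_normal_deviation_le[OF sum]) auto
  also have "\<dots> = (fact (2 * k) / (2 ^ k * fact k)) / (n * \<epsilon>\<^sup>2) ^ k"
  proof -
    have "sqrt n ^ (2 * k) = n ^ k" and "(n * \<epsilon>) ^ (2 * k) = n ^ k * (n * \<epsilon>\<^sup>2) ^ k"
      using n by (simp_all add: power_mult power_mult_distrib power2_eq_square)
    then show ?thesis using n \<epsilon> by simp
  qed
  finally show ?thesis by (simp add: n_def)
qed

section \<open>Drawing an arm by inversion\<close>

(* The second disjunct is the junk value of LEAST when u exceeds the total mass. *)
lemma draw_arm_iff:
  fixes \<pi> :: "(real, 'k::{finite,linorder}) vec"
  shows "draw_arm \<pi> u = a \<longleftrightarrow>
    (u < (\<Sum>c\<in>{..a}. \<pi>$c) \<and> (\<forall>b<a. (\<Sum>c\<in>{..b}. \<pi>$c) \<le> u)) \<or>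
    ((\<forall>b. (\<Sum>c\<in>{..b}. \<pi>$c) \<le> u) \<and> a = (LEAST b::'k. False))"
proof (cases "\<exists>b. u < (\<Sum>c\<in>{..b}. \<pi>$c)")
  case True
  let ?P = "\<lambda>b. u < (\<Sum>c\<in>{..b}. \<pi>$c)"
  have "draw_arm \<pi> u = Min {b. ?P b}"
    unfolding draw_arm_def using True by (intro Least_Min) auto
  also have "\<dots> = a \<longleftrightarrow> ?P a \<and> (\<forall>b. ?P b \<longrightarrow> a \<le> b)"
    using True by (subst Min_eq_iff) auto
  also have "(\<forall>b. ?P b \<longrightarrow> a \<le> b) \<longleftrightarrow> (\<forall>b<a. (\<Sum>c\<in>{..b}. \<pi>$c) \<le> u)"
    by (meson not_le)
  finally show ?thesis
    using True by (meson not_le)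
next
  case False
  then have "draw_arm \<pi> u = (LEAST b::'k. False)"
    unfolding draw_arm_def by simp
  with False show ?thesis by (auto simp: not_less dest: leD)
qed

lemma draw_arm_eqI:
  fixes \<pi> :: "(real, 'k::{finite,linorder}) vec"
  assumes "\<And>b. 0 \<le> \<pi>$b" and "(\<Sum>b\<in>{..<a}. \<pi>$b) \<le> u" and "u < (\<Sum>b\<in>{..a}. \<pi>$b)"
  shows "draw_arm \<pi> u = a"
proof -
  have "(\<Sum>c\<in>{..b}. \<pi>$c) \<le> (\<Sum>c\<in>{..<a}. \<pi>$c)" if "b < a" for b
    using that assms(1) by (intro sum_mono2) auto
  with assms(2,3) show ?thesis
    unfolding draw_arm_iff by force
qed

lemma measurable_draw_arm[measurable]:
  fixes g :: "'a \<Rightarrow> (real, 'k::{finite,linorder}) vec"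
  assumes [measurable]: "g \<in> borel_measurable M" "h \<in> borel_measurable M"
  shows "(\<lambda>x. draw_arm (g x) (h x)) \<in> measurable M (count_space UNIV)"
proof (subst measurable_count_space_eq2_countable, intro conjI ballI)
  fix a :: 'k
  have "(\<lambda>x. draw_arm (g x) (h x)) -` {a} \<inter> space M =
     {x\<in>space M. (h x < (\<Sum>c\<in>{..a}. g x$c) \<and> (\<forall>b<a. (\<Sum>c\<in>{..b}. g x$c) \<le> h x))
       \<or> ((\<forall>b. (\<Sum>c\<in>{..b}. g x$c) \<le> h x) \<and> a = (LEAST b::'k. False))}"
    by (auto simp only: vimage_def Int_iff mem_Collect_eq singleton_iff draw_arm_iff)
  also have "\<dots> \<in> sets M" by measurable
  finally show "(\<lambda>x. draw_arm (g x) (h x)) -` {a} \<inter> space M \<in> sets M" .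
qed simp

definition has_arm_floor :: "(real, 'k::finite) vec \<Rightarrow> 'k \<Rightarrow> real \<Rightarrow> bool" where
  "has_arm_floor \<pi> a q \<longleftrightarrow> (\<forall>b. 0 \<le> \<pi>$b) \<and> (\<Sum>b\<in>UNIV. \<pi>$b) \<le> 1 \<and> q \<le> \<pi>$a"

lemma has_arm_floor_le_1: "has_arm_floor \<pi> a q \<Longrightarrow> q \<le> 1"
  unfolding has_arm_floor_def
  by (metis (no_types, lifting) UNIV_I finite order.trans member_le_sum)

lemma has_arm_floor_mono: "has_arm_floor \<pi> a q \<Longrightarrow> q' \<le> q \<Longrightarrow> has_arm_floor \<pi> a q'"
  by (auto simp: has_arm_floor_def)

lemma uniform_draw_arm_miss_le:
  fixes \<pi> :: "(real, 'k::{finite,linorder}) vec"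
  assumes "has_arm_floor \<pi> a q"
  shows "emeasure (density lborel (indicator {0..1::real})) {u. draw_arm \<pi> u \<noteq> a} \<le> ennreal (1 - q)"
proof -
  have nonneg: "\<And>b. 0 \<le> \<pi>$b" and sum_le: "(\<Sum>b\<in>UNIV. \<pi>$b) \<le> 1" and q: "q \<le> \<pi>$a"
    using assms by (auto simp: has_arm_floor_def)
  define c where "c = (\<Sum>b\<in>{..<a}. \<pi>$b)"
  define d where "d = (\<Sum>b\<in>{..a}. \<pi>$b)"
  have "{..a} = insert a {..<a}" by auto
  then have d: "d = c + \<pi>$a" by (simp add: c_def d_def)
  have c0: "0 \<le> c" unfolding c_def by (intro sum_nonneg) (auto simp: nonneg)
  have "d \<le> (\<Sum>b\<in>UNIV. \<pi>$b)" unfolding d_def by (intro sum_mono2) (auto simp: nonneg)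
  with sum_le have d1: "d \<le> 1" by simp
  have "{u. draw_arm \<pi> u \<noteq> a} \<subseteq> {..<c} \<union> {d..}"
  proof
    fix u assume "u \<in> {u. draw_arm \<pi> u \<noteq> a}"
    then show "u \<in> {..<c} \<union> {d..}"
      using draw_arm_eqI[of \<pi> a u, OF nonneg] unfolding c_def d_def by fastforce
  qed
  then have "emeasure (density lborel (indicator {0..1::real})) {u. draw_arm \<pi> u \<noteq> a}
      \<le> emeasure (density lborel (indicator {0..1::real})) ({..<c} \<union> {d..})"
    by (intro emeasure_mono) auto
  also have "\<dots> = emeasure lborel ({0..1} \<inter> ({..<c} \<union> {d..}))"
    by (rule emeasure_restricted) auto
  also have "\<dots> \<le> emeasure lborel ({0..c} \<union> {d..1::real})"
    by (intro emeasure_mono) auto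
  also have "\<dots> \<le> emeasure lborel {0..c} + emeasure lborel {d..1::real}"
    by (rule emeasure_subadditive) auto
  also have "\<dots> = ennreal (1 - \<pi>$a)"
    using c0 d1 d nonneg[of a] by (simp add: ennreal_plus[symmetric])
  also have "\<dots> \<le> ennreal (1 - q)"
    using q by (intro ennreal_leI) simp
  finally show ?thesis .
qed

lemma (in prob_space) prob_indep_draw_arm_miss:
  fixes f :: "'y \<Rightarrow> (real, 'k::{finite,linorder}) vec" and g :: "'y \<Rightarrow> real"
  assumes ind: "indep_var N Y N' W" and g[measurable]: "g \<in> borel_measurable N'"
    and unif: "distributed M lborel (\<lambda>\<omega>. g (W \<omega>)) (indicator {0..1})"
    and A[measurable]: "A \<in> sets N" and f[measurable]: "f \<in> borel_measurable N"
    and floor: "\<And>y. y \<in> space N \<Longrightarrow> has_arm_floor (f y) a q"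
  shows "prob {\<omega>\<in>space M. Y \<omega> \<in> A \<and> draw_arm (f (Y \<omega>)) (g (W \<omega>)) \<noteq> a}
    \<le> (1 - q) * prob {\<omega>\<in>space M. Y \<omega> \<in> A}"
proof -
  have [measurable]: "Y \<in> measurable M N" "W \<in> measurable M N'"
    using ind unfolding indep_var_distribution_eq by auto
  have uniform: "distr (distr M N' W) borel g = density lborel (indicator {0..1})"
  proof -
    have "distr (distr M N' W) borel g = distr M lborel (\<lambda>\<omega>. g (W \<omega>))"
      by (subst distr_distr) (auto simp: comp_def intro: distr_cong)
    then show ?thesis using unif unfolding distributed_def by simp
  qed
  have q1: "q \<le> 1"
  proof -
    obtain \<omega> where "\<omega> \<in> space M" using not_empty by blast
    then show ?thesis
      using floor[of "Y \<omega>"] has_arm_floor_le_1 measurable_space[of Y M N] by auto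
  qed
  define S where "S = {p \<in> space (N \<Otimes>\<^sub>M N'). fst p \<in> A \<and> draw_arm (f (fst p)) (g (snd p)) \<noteq> a}"
  have "emeasure M {\<omega>\<in>space M. (Y \<omega>, W \<omega>) \<in> S} \<le> ennreal (1 - q) * emeasure M {\<omega>\<in>space M. Y \<omega> \<in> A}"
  proof (rule emeasure_indep_pair_le[OF ind _ A])
    show "S \<in> sets (N \<Otimes>\<^sub>M N')" unfolding S_def by measurable
    fix y assume y: "y \<in> space N"
    have miss: "{v. draw_arm (f y) v \<noteq> a} \<in> sets borel"
      using measurable_sets[OF measurable_draw_arm[of "\<lambda>_. f y" borel id], of "UNIV - {a}"]
      by (simp add: vimage_def Collect_neg_eq[symmetric])
    show "emeasure (distr M N' W) (Pair y -` S) \<le> ennreal (1 - q) * indicator A y"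
    proof (cases "y \<in> A")
      case True
      then have "Pair y -` S = g -` {v. draw_arm (f y) v \<noteq> a} \<inter> space N'"
        using y by (auto simp: S_def space_pair_measure)
      then have "emeasure (distr M N' W) (Pair y -` S)
          = emeasure (density lborel (indicator {0..1})) {v. draw_arm (f y) v \<noteq> a}"
        using miss by (simp add: uniform[symmetric] emeasure_distr)
      with True show ?thesis
        using uniform_draw_arm_miss_le[OF floor[OF y]] by simp
    qed (simp add: S_def)
  qed
  moreover have "{\<omega>\<in>space M. (Y \<omega>, W \<omega>) \<in> S}
      = {\<omega>\<in>space M. Y \<omega> \<in> A \<and> draw_arm (f (Y \<omega>)) (g (W \<omega>)) \<noteq> a}"
    by (auto simp: S_def space_pair_measure measurable_space[of Y M N] measurable_space[of W M N'])
  ultimately show ?thesis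
    using q1 by (simp add: emeasure_eq_measure ennreal_mult[symmetric] ennreal_le_iff)
qed

section \<open>Forced exploration in the sampling rule\<close>

lemma sum_pic_pre:
  fixes p :: "(real, 'k::finite) vec"
  assumes nonneg: "\<And>a. 0 \<le> p$a"
  shows "(\<Sum>b\<in>UNIV. pic_pre p $ b) = 1"
proof (cases "K0 p = 0")
  case True
  then show ?thesis
    by (simp add: pic_pre_def sum.distrib psum_def[symmetric])
next
  case False
  have "pic_pre p $ b = p$b + (if p$b = 0 then (1 - psum p) / K0 p else 0)" for b
    using False nonneg[of b] by (auto simp: pic_pre_def)
  then have "(\<Sum>b\<in>UNIV. pic_pre p $ b) = psum p + K0 p * ((1 - psum p) / K0 p)"
    by (simp add: sum.distrib sum.If_cases psum_def K0_def)
  with False show ?thesis by simp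
qed

lemma p0_pre_le_pic_pre:
  fixes p :: "(real, 'k::finite) vec"
  assumes nonneg: "\<And>a. 0 \<le> p$a" and "psum p \<le> 1"
  shows "0 \<le> p0_pre p" and "p0_pre p \<le> pic_pre p $ b"
proof -
  have min_pos: "0 \<le> Min {p$a | a. p$a > 0} \<and> (p$b > 0 \<longrightarrow> Min {p$a | a. p$a > 0} \<le> p$b)"
    if "{a. p$a > 0} \<noteq> {}"
    using that by (auto intro!: Min_le simp: Min_ge_iff)
  show "0 \<le> p0_pre p" "p0_pre p \<le> pic_pre p $ b"
  proof (atomize (full), cases "K0 p = 0")
    case True
    then have pos: "p$a > 0" for a
      using nonneg[of a] by (auto simp: K0_def order.order_iff_strict)
    then have "0 \<le> p0_pre p \<and> p0_pre p \<le> p$b"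
      using True min_pos by (auto simp: p0_pre_def)
    moreover have "0 \<le> (1 - psum p) / CARD('k)"
      using \<open>psum p \<le> 1\<close> by simp
    ultimately show "0 \<le> p0_pre p \<and> p0_pre p \<le> pic_pre p $ b"
      using True by (simp add: pic_pre_def)
  next
    case False
    then have "0 < real (K0 p)" by simp
    then have "0 \<le> (1 - psum p) / (2 * K0 p)" "(1 - psum p) / (2 * K0 p) \<le> (1 - psum p) / K0 p"
      using \<open>psum p \<le> 1\<close> by (simp_all add: frac_le)
    then show "0 \<le> p0_pre p \<and> p0_pre p \<le> pic_pre p $ b"
      using False min_pos by (auto simp: p0_pre_def pic_pre_def min_le_iff_disj)
  qed
qed

lemma fair_setting_exploration:
  fixes prule :: "(real, 'k::finite) vec \<Rightarrow> (real, 'k) vec"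
  assumes "fair_setting prule pic p0 K'"
  shows "0 \<le> p0" and "\<And>b. p0 \<le> pic$b" and "(\<Sum>b\<in>UNIV. pic$b) = 1" and "\<And>v b. 0 \<le> prule v $ b"
proof -
  have "1 / (2 * real CARD('k)) \<le> 1 / real CARD('k)"
    by (simp add: frac_le)
  then show "0 \<le> p0" "\<And>b. p0 \<le> pic$b" "(\<Sum>b\<in>UNIV. pic$b) = 1" "\<And>v b. 0 \<le> prule v $ b"
    using assms unfolding fair_setting_def
    by (auto simp: sum_pic_pre p0_pre_le_pic_pre)
qed

lemma eps_t_pos: "1 \<le> r \<Longrightarrow> 0 < eps_t r"
  by (simp add: eps_t_def)

lemma eps_t_le_1:
  assumes "1 \<le> r" shows "eps_t r \<le> 1"
proof -
  have "1 \<le> sqrt (real r)" using assms by simp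
  then have "1 / (2 * sqrt (real r)) \<le> 1 / 1"
    by (intro divide_left_mono; linarith)
  then show ?thesis by (simp add: eps_t_def)
qed

lemma eps_t_ge:
  assumes "1 \<le> r" and "real r \<le> m ^ 4"
  shows "1 / (2 * m\<^sup>2) \<le> eps_t r"
proof -
  have "m ^ 4 = (m\<^sup>2)\<^sup>2" by simp
  then have "sqrt (real r) \<le> sqrt ((m\<^sup>2)\<^sup>2)"
    using assms(2) by simp
  then have le: "sqrt (real r) \<le> m\<^sup>2" by (simp only: real_sqrt_abs) simp
  have pos: "0 < sqrt (real r)" using assms(1) by simp
  show ?thesis
    unfolding eps_t_def using le pos
    by (intro divide_left_mono mult_left_mono mult_pos_pos) auto
qed

lemma ftas_pi_has_arm_floor:
  fixes prule :: "(real, 'k::finite) vec \<Rightarrow> (real, 'k) vec"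
  assumes fs: "fair_setting prule pic p0 K'" and ws: "wstar_selection prule sel" and r: "1 \<le> r"
  shows "has_arm_floor (ftas_pi sel pic r v) a (p0 * eps_t r)"
proof -
  note fair = fair_setting_exploration[OF fs]
  have sel: "0 \<le> sel v $ b" "(\<Sum>b\<in>UNIV. sel v $ b) = 1" for b
    using ws fair(4)[of v b] unfolding wstar_selection_def Sigma_p_def by (auto intro: order_trans)
  have eps: "0 \<le> eps_t r" "eps_t r \<le> 1"
    using eps_t_pos[OF r] eps_t_le_1[OF r] by auto
  have pic: "0 \<le> pic$b" for b
    using fair(1,2) by (rule order_trans)
  have "(\<Sum>b\<in>UNIV. ftas_pi sel pic r v $ b)
      = (1 - eps_t r) * (\<Sum>b\<in>UNIV. sel v $ b) + eps_t r * (\<Sum>b\<in>UNIV. pic$b)"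
    by (simp add: ftas_pi_def sum.distrib sum_distrib_left)
  moreover have "p0 * eps_t r \<le> (1 - eps_t r) * sel v $ a + eps_t r * pic$a"
  proof -
    have "p0 * eps_t r \<le> eps_t r * pic$a"
      using mult_right_mono[OF fair(2)[of a] eps(1)] by (simp add: mult.commute)
    moreover have "0 \<le> (1 - eps_t r) * sel v $ a"
      using eps sel(1)[of a] by simp
    ultimately show ?thesis by linarith
  qed
  ultimately show ?thesis
    using sel eps pic fair(3) by (simp add: has_arm_floor_def ftas_pi_def)
qed

lemma ftas_pi_has_arm_floor_early:
  fixes prule :: "(real, 'k::finite) vec \<Rightarrow> (real, 'k) vec"
  assumes fs: "fair_setting prule pic p0 K'" and ws: "wstar_selection prule sel"
    and "1 \<le> r" and "real r \<le> m ^ 4"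
  shows "has_arm_floor (ftas_pi sel pic r v) a (p0 / (2 * m\<^sup>2))"
proof (rule has_arm_floor_mono[OF ftas_pi_has_arm_floor[OF fs ws \<open>1 \<le> r\<close>]])
  show "p0 / (2 * m\<^sup>2) \<le> p0 * eps_t r"
    using mult_left_mono[OF eps_t_ge[OF assms(3,4)] fair_setting_exploration(1)[OF fs]] by simp
qed

section \<open>Pull counts as functions of the reward table\<close>

lemma ftas_counts_Suc_apply:
  "ftas_counts sel pic dflt x u (Suc t) a = ftas_counts sel pic dflt x u t a +
     (if draw_arm (ftas_pi sel pic (Suc t) (emp_mean x dflt (ftas_counts sel pic dflt x u t)))
           (u (Suc t)) = a then 1 else 0)"
  by (simp add: Let_def)

lemma ftas_counts_mono:
  "s \<le> t \<Longrightarrow> ftas_counts sel pic dflt x u s a \<le> ftas_counts sel pic dflt x u t a"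
  by (rule lift_Suc_mono_le[of "\<lambda>t. ftas_counts sel pic dflt x u t a"])
     (simp_all add: Let_def)

lemma ftas_counts_le: "ftas_counts sel pic dflt x u t a \<le> t"
  by (induction t) (simp_all add: ftas_counts_Suc_apply del: ftas_counts.simps(2))

lemma ftas_counts_cong:
  "(\<And>s. 1 \<le> s \<Longrightarrow> s \<le> t \<Longrightarrow> u s = u' s) \<Longrightarrow>
   ftas_counts sel pic dflt x u t = ftas_counts sel pic dflt x u' t"
  by (induction t) (simp_all add: Let_def)

(* The independent family of bandit_env as one table.  The counts after round r + 1 depend on it
   only through U (r + 1) and the coordinates other than Inr (r + 1), which are independent. *)
definition bandit_table ::
  "('k \<Rightarrow> nat \<Rightarrow> 'w \<Rightarrow> real) \<Rightarrow> (nat \<Rightarrow> 'w \<Rightarrow> real) \<Rightarrow> ('k \<times> nat) + nat \<Rightarrow> 'w \<Rightarrow> real" where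
  "bandit_table X U = (\<lambda>i. case i of Inl (a, n) \<Rightarrow> X a n | Inr t \<Rightarrow> U t)"

definition table_counts ::
  "((real, 'k::{finite,linorder}) vec \<Rightarrow> (real, 'k) vec) \<Rightarrow> (real, 'k) vec \<Rightarrow> (real, 'k) vec
     \<Rightarrow> (('k \<times> nat) + nat \<Rightarrow> real) \<Rightarrow> nat \<Rightarrow> 'k \<Rightarrow> nat" where
  "table_counts sel pic dflt y t = ftas_counts sel pic dflt (\<lambda>a n. y (Inl (a, n))) (\<lambda>s. y (Inr s)) t"

definition ftas_pulls ::
  "((real, 'k::{finite,linorder}) vec \<Rightarrow> (real, 'k) vec) \<Rightarrow> (real, 'k) vec \<Rightarrow> (real, 'k) vec
     \<Rightarrow> ('k \<Rightarrow> nat \<Rightarrow> 'w \<Rightarrow> real) \<Rightarrow> (nat \<Rightarrow> 'w \<Rightarrow> real) \<Rightarrow> nat \<Rightarrow> 'w \<Rightarrow> 'k \<Rightarrow> nat" where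
  "ftas_pulls sel pic dflt X U t \<omega> = ftas_counts sel pic dflt (\<lambda>a n. X a n \<omega>) (\<lambda>s. U s \<omega>) t"

lemma bandit_env_prob_space: "bandit_env M \<theta> X U \<Longrightarrow> prob_space M"
  by (simp add: bandit_env_def)

lemma indep_vars_bandit_table:
  "bandit_env M \<theta> X U \<Longrightarrow> prob_space.indep_vars M (\<lambda>_. borel) (bandit_table X U) UNIV"
  by (simp add: bandit_env_def bandit_table_def)

lemma bandit_env_reward_measurable: "bandit_env M \<theta> X U \<Longrightarrow> X a n \<in> borel_measurable M"
  by (simp add: bandit_env_def distributed_def)

lemma ftas_pulls_eq_table_counts:
  "ftas_pulls sel pic dflt X U t \<omega> = table_counts sel pic dflt (\<lambda>i. bandit_table X U i \<omega>) t"
  by (simp add: ftas_pulls_def table_counts_def bandit_table_def)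

lemma table_counts_restrict:
  assumes "\<And>s. 1 \<le> s \<Longrightarrow> s \<le> t \<Longrightarrow> Inr s \<in> J" and "\<And>a n. Inl (a, n) \<in> J"
  shows "table_counts sel pic dflt (restrict y J) t = table_counts sel pic dflt y t"
proof -
  have "(\<lambda>a n. restrict y J (Inl (a, n))) = (\<lambda>a n. y (Inl (a, n)))"
    using assms(2) by auto
  then show ?thesis
    unfolding table_counts_def by (simp only:) (rule ftas_counts_cong, simp add: assms(1))
qed

lemma measurable_table_emp_mean:
  fixes dflt :: "(real, 'k::{finite,linorder}) vec"
  assumes "\<And>a n. Inl (a, n) \<in> J"
  shows "(\<lambda>y. emp_mean (\<lambda>a n. y (Inl (a, n))) dflt N) \<in> borel_measurable (PiM J (\<lambda>_. borel))"
proof (rule borel_measurable_vecI)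
  fix a
  have [measurable]: "(\<lambda>y. y (Inl (a, n))) \<in> borel_measurable (PiM J (\<lambda>_. borel))" for n
    using assms by (intro measurable_component_singleton) auto
  show "(\<lambda>y. emp_mean (\<lambda>a n. y (Inl (a, n))) dflt N $ a) \<in> borel_measurable (PiM J (\<lambda>_. borel))"
    unfolding emp_mean_def by simp
qed

lemma measurable_table_ftas_pi:
  fixes sel :: "(real, 'k::{finite,linorder}) vec \<Rightarrow> (real, 'k) vec"
  assumes [measurable]: "sel \<in> borel_measurable borel"
    and J: "\<And>a n. Inl (a, n) \<in> J"
    and [measurable]: "(\<lambda>y. table_counts sel pic dflt y t) \<in> measurable (PiM J (\<lambda>_. borel)) (count_space UNIV)"
  shows "(\<lambda>y. ftas_pi sel pic r (emp_mean (\<lambda>a n. y (Inl (a, n))) dflt (table_counts sel pic dflt y t)))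
    \<in> borel_measurable (PiM J (\<lambda>_. borel))"
proof -
  have [measurable]: "(\<lambda>y. emp_mean (\<lambda>a n. y (Inl (a, n))) dflt (table_counts sel pic dflt y t))
      \<in> borel_measurable (PiM J (\<lambda>_. borel))"
    by (rule measurable_compose_countable[where f="\<lambda>N y. emp_mean (\<lambda>a n. y (Inl (a, n))) dflt N"])
       (auto intro: measurable_table_emp_mean J)
  show ?thesis unfolding ftas_pi_def by measurable
qed

lemma measurable_table_counts:
  fixes sel :: "(real, 'k::{finite,linorder}) vec \<Rightarrow> (real, 'k) vec"
  assumes sel: "sel \<in> borel_measurable borel"
    and J: "\<And>a n. Inl (a, n) \<in> J" and JR: "\<And>s. 1 \<le> s \<Longrightarrow> s \<le> t \<Longrightarrow> Inr s \<in> J"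
  shows "(\<lambda>y. table_counts sel pic dflt y t) \<in> measurable (PiM J (\<lambda>_. borel)) (count_space UNIV)"
  using JR
proof (induction t)
  case 0
  then show ?case by (simp add: table_counts_def)
next
  case (Suc t)
  let ?M = "PiM J (\<lambda>_. borel) :: (('k \<times> nat) + nat \<Rightarrow> real) measure"
  have [measurable]: "(\<lambda>y. table_counts sel pic dflt y t) \<in> measurable ?M (count_space UNIV)"
    using Suc by auto
  have [measurable]: "(\<lambda>y. y (Inr (Suc t))) \<in> borel_measurable ?M"
    using Suc.prems by (intro measurable_component_singleton) auto
  have [measurable]: "(\<lambda>y. ftas_pi sel pic (Suc t)
      (emp_mean (\<lambda>a n. y (Inl (a, n))) dflt (table_counts sel pic dflt y t))) \<in> borel_measurable ?M"
    by (rule measurable_table_ftas_pi[OF sel J]) measurable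
  have step: "(\<lambda>y. table_counts sel pic dflt y (Suc t)) = (\<lambda>y. (\<lambda>N b. N(b := Suc (N b)))
      (table_counts sel pic dflt y t)
      (draw_arm (ftas_pi sel pic (Suc t) (emp_mean (\<lambda>a n. y (Inl (a, n))) dflt
        (table_counts sel pic dflt y t))) (y (Inr (Suc t)))))"
    by (simp add: table_counts_def Let_def)
  show ?case unfolding step
    by (rule measurable_compose_countable[where f="\<lambda>N y. (\<lambda>N b. N(b := Suc (N b))) N
      (draw_arm (ftas_pi sel pic (Suc t) (emp_mean (\<lambda>a n. y (Inl (a, n))) dflt
        (table_counts sel pic dflt y t))) (y (Inr (Suc t))))"])
       (auto intro!: measurable_compose_countable[where f="\<lambda>b y. (\<lambda>N b. N(b := Suc (N b))) _ b"])
qed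

lemma measurable_ftas_pulls:
  fixes sel :: "(real, 'k::{finite,linorder}) vec \<Rightarrow> (real, 'k) vec"
  assumes env: "bandit_env M \<theta> X U" and sel: "sel \<in> borel_measurable borel"
  shows "ftas_pulls sel pic dflt X U t \<in> measurable M (count_space UNIV)"
proof -
  interpret prob_space M by (rule bandit_env_prob_space[OF env])
  have "(\<lambda>\<omega>. restrict (\<lambda>i. bandit_table X U i \<omega>) UNIV) \<in> measurable M (PiM UNIV (\<lambda>_. borel))"
    using indep_vars_bandit_table[OF env] by (intro measurable_restrict) (auto simp: indep_vars_def)
  moreover have "(\<lambda>y. table_counts sel pic dflt y t) \<in> measurable (PiM UNIV (\<lambda>_. borel)) (count_space UNIV)"
    by (rule measurable_table_counts[OF sel]) auto
  ultimately have "(\<lambda>\<omega>. table_counts sel pic dflt (restrict (\<lambda>i. bandit_table X U i \<omega>) UNIV) t)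
      \<in> measurable M (count_space UNIV)"
    by (rule measurable_compose)
  then show ?thesis
    by (simp add: ftas_pulls_eq_table_counts[abs_def] restrict_UNIV)
qed

lemma sets_ftas_pulls:
  fixes sel :: "(real, 'k::{finite,linorder}) vec \<Rightarrow> (real, 'k) vec"
  assumes "bandit_env M \<theta> X U" and "sel \<in> borel_measurable borel"
  shows "{\<omega>\<in>space M. P (ftas_pulls sel pic dflt X U t \<omega>) (ftas_pulls sel pic dflt X U s \<omega>)} \<in> sets M"
proof -
  have [measurable]: "ftas_pulls sel pic dflt X U r \<in> measurable M (count_space UNIV)" for r
    using measurable_ftas_pulls[OF assms] .
  have "(\<lambda>\<omega>. (ftas_pulls sel pic dflt X U t \<omega>, ftas_pulls sel pic dflt X U s \<omega>))
      \<in> measurable M (count_space UNIV \<Otimes>\<^sub>M count_space UNIV)"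
    by measurable
  then have "(\<lambda>\<omega>. (ftas_pulls sel pic dflt X U t \<omega>, ftas_pulls sel pic dflt X U s \<omega>))
      \<in> measurable M (count_space UNIV)"
    by (simp add: pair_measure_countable)
  from measurable_sets[OF this, of "{p. P (fst p) (snd p)}"] show ?thesis
    by (simp add: vimage_def Int_def conj_commute)
qed

section \<open>Every arm is pulled often early on\<close>

lemma prob_round_miss:
  fixes sel :: "(real, 'k::{finite,linorder}) vec \<Rightarrow> (real, 'k) vec" and \<theta> :: "(real, 'k) vec"
    and X :: "'k \<Rightarrow> nat \<Rightarrow> 'w \<Rightarrow> real" and U :: "nat \<Rightarrow> 'w \<Rightarrow> real" and r :: nat
  defines "J \<equiv> UNIV - {Inr (Suc r)} :: (('k \<times> nat) + nat) set"
    and "Y \<equiv> \<lambda>\<omega>. restrict (\<lambda>i. bandit_table X U i \<omega>) (UNIV - {Inr (Suc r)})"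
  assumes env: "bandit_env M \<theta> X U" and sel: "sel \<in> borel_measurable borel"
    and floor: "\<And>v. has_arm_floor (ftas_pi sel pic (Suc r) v) a q"
    and A: "A \<in> sets (PiM J (\<lambda>_. borel))"
  shows "measure M {\<omega>\<in>space M. Y \<omega> \<in> A \<and> draw_arm (ftas_pi sel pic (Suc r)
      (emp_mean (\<lambda>a n. Y \<omega> (Inl (a, n))) dflt (table_counts sel pic dflt (Y \<omega>) r))) (U (Suc r) \<omega>) \<noteq> a}
    \<le> (1 - q) * measure M {\<omega>\<in>space M. Y \<omega> \<in> A}"
proof -
  interpret prob_space M by (rule bandit_env_prob_space[OF env])
  define W where "W = (\<lambda>\<omega>. restrict (\<lambda>i. bandit_table X U i \<omega>) {Inr (Suc r)})"
  have J: "Inl (a, n) \<in> J" "t \<le> r \<Longrightarrow> Inr t \<in> J" for a n t by (auto simp: J_def)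
  have "indep_var (PiM J (\<lambda>_. borel)) Y (PiM {Inr (Suc r)} (\<lambda>_. borel)) W"
    unfolding Y_def W_def J_def by (rule indep_var_restrict[OF indep_vars_bandit_table[OF env]]) auto
  moreover have "(\<lambda>y. ftas_pi sel pic (Suc r) (emp_mean (\<lambda>a n. y (Inl (a, n))) dflt (table_counts sel pic dflt y r)))
      \<in> borel_measurable (PiM J (\<lambda>_. borel))"
    using J by (intro measurable_table_ftas_pi[OF sel] measurable_table_counts[OF sel]) auto
  moreover have "distributed M lborel (\<lambda>\<omega>. W \<omega> (Inr (Suc r))) (indicator {0..1})"
    using env by (simp add: bandit_env_def W_def bandit_table_def)
  moreover have "(\<lambda>w. w (Inr (Suc r))) \<in> borel_measurable (PiM {Inr (Suc r)} (\<lambda>_. borel))"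
    by (rule measurable_component_singleton) simp
  ultimately have "prob {\<omega>\<in>space M. Y \<omega> \<in> A \<and> draw_arm (ftas_pi sel pic (Suc r)
      (emp_mean (\<lambda>a n. Y \<omega> (Inl (a, n))) dflt (table_counts sel pic dflt (Y \<omega>) r))) (W \<omega> (Inr (Suc r))) \<noteq> a}
    \<le> (1 - q) * prob {\<omega>\<in>space M. Y \<omega> \<in> A}"
    using A floor by (intro prob_indep_draw_arm_miss[where g="\<lambda>w. w (Inr (Suc r))"]) auto
  then show ?thesis by (simp add: W_def bandit_table_def)
qed

lemma prob_no_pull_Suc:
  fixes sel :: "(real, 'k::{finite,linorder}) vec \<Rightarrow> (real, 'k) vec" and \<theta> :: "(real, 'k) vec"
  assumes env: "bandit_env M \<theta> X U" and sel: "sel \<in> borel_measurable borel"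
    and floor: "\<And>v. has_arm_floor (ftas_pi sel pic (Suc r) v) a q" and "s \<le> r"
  shows "measure M {\<omega>\<in>space M. ftas_pulls sel pic dflt X U (Suc r) \<omega> a = ftas_pulls sel pic dflt X U s \<omega> a}
    \<le> (1 - q) * measure M {\<omega>\<in>space M. ftas_pulls sel pic dflt X U r \<omega> a = ftas_pulls sel pic dflt X U s \<omega> a}"
proof -
  let ?N = "\<lambda>t \<omega>. ftas_pulls sel pic dflt X U t \<omega> a"
  define J where "J = (UNIV :: (('k \<times> nat) + nat) set) - {Inr (Suc r)}"
  define Y where "Y = (\<lambda>\<omega>. restrict (\<lambda>i. bandit_table X U i \<omega>) J)"
  define A where "A = {y \<in> space (PiM J (\<lambda>_. borel)). table_counts sel pic dflt y r a = table_counts sel pic dflt y s a}"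
  define draw where "draw \<omega> = draw_arm (ftas_pi sel pic (Suc r) (emp_mean (\<lambda>a n. Y \<omega> (Inl (a, n))) dflt
    (table_counts sel pic dflt (Y \<omega>) r))) (U (Suc r) \<omega>)" for \<omega>
  have J: "Inl (a, n) \<in> J" "t \<le> r \<Longrightarrow> Inr t \<in> J" for a n t by (auto simp: J_def)
  have counts_Y: "table_counts sel pic dflt (Y \<omega>) t = ftas_pulls sel pic dflt X U t \<omega>" if "t \<le> r" for t \<omega>
    unfolding Y_def ftas_pulls_eq_table_counts using that J by (intro table_counts_restrict) auto
  have [measurable]: "(\<lambda>y. table_counts sel pic dflt y t a) \<in> measurable (PiM J (\<lambda>_. borel)) (count_space UNIV)"
    if "t \<le> r" for t
    using measurable_compose[OF measurable_table_counts[OF sel], of J t "\<lambda>N. N a"] J that by auto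
  note this[OF order_refl, measurable] this[OF \<open>s \<le> r\<close>, measurable]
  have "A \<in> sets (PiM J (\<lambda>_. borel))" unfolding A_def by measurable
  then have "measure M {\<omega>\<in>space M. Y \<omega> \<in> A \<and> draw \<omega> \<noteq> a} \<le> (1 - q) * measure M {\<omega>\<in>space M. Y \<omega> \<in> A}"
    unfolding draw_def Y_def J_def by (rule prob_round_miss[OF env sel floor])
  moreover have in_A: "Y \<omega> \<in> A \<longleftrightarrow> ?N r \<omega> = ?N s \<omega>" for \<omega>
    using counts_Y \<open>s \<le> r\<close> by (auto simp: A_def Y_def space_PiM)
  moreover have "?N (Suc r) \<omega> = ?N s \<omega> \<longleftrightarrow> Y \<omega> \<in> A \<and> draw \<omega> \<noteq> a" for \<omega>
  proof -
    have "?N (Suc r) \<omega> = ?N r \<omega> + (if draw \<omega> = a then 1 else 0)"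
      using counts_Y[of r \<omega>]
      by (simp add: ftas_pulls_def ftas_counts_Suc_apply draw_def Y_def J_def bandit_table_def
          table_counts_def del: ftas_counts.simps(2))
    moreover have "?N s \<omega> \<le> ?N r \<omega>"
      unfolding ftas_pulls_def using \<open>s \<le> r\<close> by (rule ftas_counts_mono)
    ultimately show ?thesis unfolding in_A by auto
  qed
  ultimately show ?thesis by simp
qed

lemma prob_no_pull_block:
  fixes sel :: "(real, 'k::{finite,linorder}) vec \<Rightarrow> (real, 'k) vec" and \<theta> :: "(real, 'k) vec"
  assumes env: "bandit_env M \<theta> X U" and sel: "sel \<in> borel_measurable borel"
    and floor: "\<And>r v. s < r \<Longrightarrow> r \<le> s + L \<Longrightarrow> has_arm_floor (ftas_pi sel pic r v) a q"
  shows "measure M {\<omega>\<in>space M. ftas_pulls sel pic dflt X U (s + L) \<omega> a = ftas_pulls sel pic dflt X U s \<omega> a}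
    \<le> (1 - q) ^ L"
  using floor
proof (induction L)
  case 0
  interpret prob_space M by (rule bandit_env_prob_space[OF env])
  show ?case by simp
next
  case (Suc L)
  have "q \<le> 1"
    using Suc.prems[of "Suc (s + L)" 0] by (auto intro: has_arm_floor_le_1)
  have "measure M {\<omega>\<in>space M. ftas_pulls sel pic dflt X U (Suc (s + L)) \<omega> a = ftas_pulls sel pic dflt X U s \<omega> a}
      \<le> (1 - q) * measure M {\<omega>\<in>space M. ftas_pulls sel pic dflt X U (s + L) \<omega> a = ftas_pulls sel pic dflt X U s \<omega> a}"
    by (rule prob_no_pull_Suc[OF env sel]) (use Suc.prems in auto)
  also have "\<dots> \<le> (1 - q) * (1 - q) ^ L"
    using Suc \<open>q \<le> 1\<close> by (intro mult_left_mono) auto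
  finally show ?case by simp
qed

lemma prob_few_pulls:
  fixes sel :: "(real, 'k::{finite,linorder}) vec \<Rightarrow> (real, 'k) vec" and \<theta> :: "(real, 'k) vec"
  assumes env: "bandit_env M \<theta> X U" and sel: "sel \<in> borel_measurable borel"
    and floor: "\<And>r v. 1 \<le> r \<Longrightarrow> r \<le> t \<Longrightarrow> has_arm_floor (ftas_pi sel pic r v) a q"
    and dL: "d * L \<le> t"
  shows "measure M {\<omega>\<in>space M. ftas_pulls sel pic dflt X U t \<omega> a < d} \<le> real d * (1 - q) ^ L"
proof -
  interpret prob_space M by (rule bandit_env_prob_space[OF env])
  let ?N = "\<lambda>t \<omega>. ftas_pulls sel pic dflt X U t \<omega> a"
  define B where "B = (\<lambda>j. {\<omega>\<in>space M. ?N (j * L + L) \<omega> = ?N (j * L) \<omega>})"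
  have B: "B j \<in> events" for j
    unfolding B_def by (rule sets_ftas_pulls[OF env sel])
  have "{\<omega>\<in>space M. ?N t \<omega> < d} \<subseteq> (\<Union>j<d. B j)"
  proof
    fix \<omega> assume \<omega>: "\<omega> \<in> {\<omega>\<in>space M. ?N t \<omega> < d}"
    have "mono (\<lambda>t. ?N t \<omega>)"
      unfolding ftas_pulls_def by (intro monoI ftas_counts_mono)
    moreover have "?N t \<omega> < ?N 0 \<omega> + d" using \<omega> by (simp add: ftas_pulls_def)
    ultimately obtain j where "j < d" "?N (j * L + L) \<omega> = ?N (j * L) \<omega>"
      using mono_block_stall[OF _ dL] by blast
    with \<omega> show "\<omega> \<in> (\<Union>j<d. B j)" by (auto simp: B_def)
  qed
  then have "prob {\<omega>\<in>space M. ?N t \<omega> < d} \<le> prob (\<Union>j<d. B j)"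
    using B by (intro finite_measure_mono) auto
  also have "\<dots> \<le> (\<Sum>j<d. prob (B j))"
    using B by (intro finite_measure_subadditive_finite) auto
  also have "\<dots> \<le> (\<Sum>j<d. (1 - q) ^ L)"
  proof (rule sum_mono)
    fix j assume "j \<in> {..<d}"
    then have "j * L + L \<le> t"
      using dL by (metis lessThan_iff add.commute le_trans mult_Suc mult_le_mono1 Suc_leI)
    then show "prob (B j) \<le> (1 - q) ^ L"
      unfolding B_def by (intro prob_no_pull_block[OF env sel] floor) auto
  qed
  finally show ?thesis by simp
qed

lemma prob_few_pulls_early:
  fixes \<theta> :: "(real, 'k::{finite,linorder}) vec" and prule :: "(real, 'k) vec \<Rightarrow> (real, 'k) vec"
  assumes env: "bandit_env M \<theta> X U" and ws: "wstar_selection prule sel"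
    and sel: "sel \<in> borel_measurable borel" and fs: "fair_setting prule pic p0 K'" and T: "1 \<le> T"
  defines "d \<equiv> nat \<lfloor>real T powr (1/16)\<rfloor>"
  shows "measure M {\<omega>\<in>space M. ftas_pulls sel pic dflt X U (nat \<lceil>real T powr (1/4)\<rceil>) \<omega> a < d}
    \<le> d * exp (- (p0 / 8 * d))"
proof -
  define t0 where "t0 = nat \<lceil>real T powr (1/4)\<rceil>"
  define q where "q = p0 / (2 * (real d + 1)\<^sup>2)"
  note bounds = root16_floor_bounds[OF T, folded d_def t0_def]
  have floor: "has_arm_floor (ftas_pi sel pic r v) a q" if "1 \<le> r" "r \<le> t0" for r v
  proof -
    have "real r \<le> real ((d + 1) ^ 4)"
      using that bounds(3) by linarith
    then show ?thesis
      unfolding q_def using that by (intro ftas_pi_has_arm_floor_early[OF fs ws]) (auto simp: add.commute)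
  qed
  have "1 \<le> t0" using bounds(1,2) by (metis one_le_power order.trans)
  then have "(1 - q) ^ (d ^ 3) \<le> exp (- (q * (d ^ 3)))"
    using floor[of 1 0] has_arm_floor_le_1 by (intro one_minus_power_le_exp) auto
  also have "\<dots> \<le> exp (- (p0 / 8 * d))"
  proof -
    have "2 * (real d + 1)\<^sup>2 \<le> 8 * (real d)\<^sup>2"
      using power_mono[of "real d + 1" "2 * real d" 2] bounds(1) by (simp add: power_mult_distrib)
    then have "p0 * (real d)^3 / (8 * (real d)\<^sup>2) \<le> p0 * (real d)^3 / (2 * (real d + 1)\<^sup>2)"
      using bounds(1) fair_setting_exploration(1)[OF fs] by (intro divide_left_mono) auto
    then show ?thesis
      using bounds(1) by (simp add: q_def power2_eq_square power3_eq_cube)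
  qed
  finally have "d * (1 - q) ^ (d ^ 3) \<le> d * exp (- (p0 / 8 * d))"
    by (simp add: mult_left_mono)
  moreover have "measure M {\<omega>\<in>space M. ftas_pulls sel pic dflt X U t0 \<omega> a < d} \<le> d * (1 - q) ^ (d ^ 3)"
    using bounds(2) by (intro prob_few_pulls[OF env sel floor]) (auto simp: power_numeral_reduce)
  ultimately show ?thesis by (simp add: t0_def)
qed

section \<open>Concentration of the empirical means\<close>

lemma prob_sample_mean_deviation:
  fixes \<theta> :: "(real, 'k::{finite,linorder}) vec"
  assumes env: "bandit_env M \<theta> X U" and "1 \<le> n" and "0 < \<epsilon>"
  shows "measure M {\<omega>\<in>space M. \<epsilon> < \<bar>(\<Sum>i<n. X a i \<omega>) / n - \<theta>$a\<bar>}
    \<le> (fact (2 * k) / (2 ^ k * fact k)) / (n * \<epsilon>\<^sup>2) ^ k"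
proof -
  interpret prob_space M by (rule bandit_env_prob_space[OF env])
  define I where "I = (\<lambda>i. Inl (a, i) :: ('k \<times> nat) + nat) ` {..<n}"
  have inj: "inj_on (\<lambda>i. Inl (a, i) :: ('k \<times> nat) + nat) {..<n}" by (auto simp: inj_on_def)
  have "prob {\<omega>\<in>space M. \<epsilon> < \<bar>(\<Sum>i\<in>I. bandit_table X U i \<omega>) / card I - \<theta>$a\<bar>}
      \<le> (fact (2 * k) / (2 ^ k * fact k)) / (card I * \<epsilon>\<^sup>2) ^ k"
  proof (rule prob_normal_mean_deviation)
    show "indep_vars (\<lambda>_. borel) (bandit_table X U) I"
      using indep_vars_bandit_table[OF env] by (rule indep_vars_subset) simp
    show "distributed M lborel (bandit_table X U i) (normal_density (\<theta>$a) 1)" if "i \<in> I" for i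
      using env that by (auto simp: I_def bandit_table_def bandit_env_def)
  qed (use assms in \<open>auto simp: I_def lessThan_empty_iff\<close>)
  moreover have "card I = n" unfolding I_def using card_image[OF inj] by simp
  ultimately show ?thesis
    by (simp add: I_def sum.reindex[OF inj] bandit_table_def)
qed

lemma prob_sample_mean_deviation_union:
  fixes \<theta> :: "(real, 'k::{finite,linorder}) vec" and k :: nat
  assumes env: "bandit_env M \<theta> X U" and "1 \<le> d" and \<epsilon>: "0 < \<epsilon>"
  defines "C \<equiv> fact (2 * k) / (2 ^ k * fact k)"
  shows "measure M (\<Union>n\<in>{d..T}. {\<omega>\<in>space M. \<epsilon> < \<bar>(\<Sum>i<n. X a i \<omega>) / n - \<theta>$a\<bar>})
    \<le> T * (C / (d * \<epsilon>\<^sup>2) ^ k)"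
proof -
  interpret prob_space M by (rule bandit_env_prob_space[OF env])
  have [measurable]: "X a i \<in> borel_measurable M" for i
    by (rule bandit_env_reward_measurable[OF env])
  have "prob (\<Union>n\<in>{d..T}. {\<omega>\<in>space M. \<epsilon> < \<bar>(\<Sum>i<n. X a i \<omega>) / n - \<theta>$a\<bar>})
      \<le> (\<Sum>n\<in>{d..T}. prob {\<omega>\<in>space M. \<epsilon> < \<bar>(\<Sum>i<n. X a i \<omega>) / n - \<theta>$a\<bar>})"
    by (intro finite_measure_subadditive_finite) auto
  also have "\<dots> \<le> (\<Sum>n\<in>{d..T}. C / (d * \<epsilon>\<^sup>2) ^ k)"
  proof (rule sum_mono)
    fix n assume n: "n \<in> {d..T}"
    then have "prob {\<omega>\<in>space M. \<epsilon> < \<bar>(\<Sum>i<n. X a i \<omega>) / n - \<theta>$a\<bar>} \<le> C / (n * \<epsilon>\<^sup>2) ^ k"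
      unfolding C_def using \<open>1 \<le> d\<close> by (intro prob_sample_mean_deviation[OF env _ \<epsilon>]) auto
    also have "\<dots> \<le> C / (d * \<epsilon>\<^sup>2) ^ k"
      unfolding C_def using n \<open>1 \<le> d\<close> \<epsilon>
      by (intro divide_left_mono power_mono mult_right_mono mult_pos_pos) auto
    finally show "prob {\<omega>\<in>space M. \<epsilon> < \<bar>(\<Sum>i<n. X a i \<omega>) / n - \<theta>$a\<bar>} \<le> C / (d * \<epsilon>\<^sup>2) ^ k" .
  qed
  also have "\<dots> = real (Suc T - d) * (C / (d * \<epsilon>\<^sup>2) ^ k)"
    by simp
  also have "\<dots> \<le> T * (C / (d * \<epsilon>\<^sup>2) ^ k)"
    using \<open>1 \<le> d\<close> by (intro mult_right_mono) (auto simp: C_def)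
  finally show ?thesis .
qed

definition concentration_failure ::
  "'w measure \<Rightarrow> ((real, 'k::{finite,linorder}) vec \<Rightarrow> (real, 'k) vec) \<Rightarrow> (real, 'k) vec \<Rightarrow> (real, 'k) vec
     \<Rightarrow> ('k \<Rightarrow> nat \<Rightarrow> 'w \<Rightarrow> real) \<Rightarrow> (nat \<Rightarrow> 'w \<Rightarrow> real) \<Rightarrow> (real, 'k) vec \<Rightarrow> real \<Rightarrow> nat \<Rightarrow> 'w set" where
  "concentration_failure M sel pic dflt X U \<theta> \<epsilon> T = {\<omega> \<in> space M. \<not> (\<forall>t\<in>{nat \<lceil>real T powr (1/4)\<rceil>..T}.
     sup_norm (ftas_emp sel pic dflt X U \<omega> t - \<theta>) \<le> \<epsilon>)}"

lemma concentration_failure_subset: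
  fixes \<theta> :: "(real, 'k::{finite,linorder}) vec"
  assumes "1 \<le> d"
  shows "concentration_failure M sel pic dflt X U \<theta> \<epsilon> T \<subseteq>
    (\<Union>a. {\<omega>\<in>space M. ftas_pulls sel pic dflt X U (nat \<lceil>real T powr (1/4)\<rceil>) \<omega> a < d} \<union>
      (\<Union>n\<in>{d..T}. {\<omega>\<in>space M. \<epsilon> < \<bar>(\<Sum>i<n. X a i \<omega>) / n - \<theta>$a\<bar>}))"
    (is "_ \<subseteq> (\<Union>a. ?few a \<union> ?dev a)")
proof
  fix \<omega> assume "\<omega> \<in> concentration_failure M sel pic dflt X U \<theta> \<epsilon> T"
  then obtain t where \<omega>: "\<omega> \<in> space M" and t: "nat \<lceil>real T powr (1/4)\<rceil> \<le> t" "t \<le> T"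
    and dev: "\<epsilon> < sup_norm (ftas_emp sel pic dflt X U \<omega> t - \<theta>)"
    by (auto simp: concentration_failure_def not_le)
  let ?D = "\<lambda>a. \<bar>(ftas_emp sel pic dflt X U \<omega> t - \<theta>) $ a\<bar>"
  have "Max (range ?D) \<in> range ?D" by (rule Max_in) auto
  then obtain a where "Max (range ?D) = ?D a" by blast
  with dev have a: "\<epsilon> < ?D a" by (simp add: sup_norm_def)
  show "\<omega> \<in> (\<Union>a. ?few a \<union> ?dev a)"
  proof (cases "\<omega> \<in> ?few a")
    case False
    define n where "n = ftas_pulls sel pic dflt X U t \<omega> a"
    have "d \<le> n"
      using False \<omega> ftas_counts_mono[OF t(1), of sel pic dflt "\<lambda>a n. X a n \<omega>" "\<lambda>s. U s \<omega>" a]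
      by (simp add: n_def ftas_pulls_def)
    moreover have "n \<le> T"
      using ftas_counts_le t(2) unfolding n_def ftas_pulls_def by (rule le_trans)
    moreover have "ftas_emp sel pic dflt X U \<omega> t $ a = (\<Sum>i<n. X a i \<omega>) / n"
      using \<open>d \<le> n\<close> assms by (simp add: ftas_emp_def emp_mean_def n_def ftas_pulls_def)
    ultimately have "\<omega> \<in> ?dev a" using a \<omega> by auto
    then show ?thesis by blast
  qed blast
qed

lemma prob_concentration_failure_le:
  fixes \<theta> :: "(real, 'k::{finite,linorder}) vec" and prule :: "(real, 'k) vec \<Rightarrow> (real, 'k) vec"
    and k :: nat
  assumes env: "bandit_env M \<theta> X U" and ws: "wstar_selection prule sel"
    and sel: "sel \<in> borel_measurable borel" and fs: "fair_setting prule pic p0 K'"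
    and \<epsilon>: "0 < \<epsilon>" and T: "1 \<le> T"
  defines "d \<equiv> nat \<lfloor>real T powr (1/16)\<rfloor>" and "C \<equiv> fact (2 * k) / (2 ^ k * fact k)"
  shows "measure M (concentration_failure M sel pic dflt X U \<theta> \<epsilon> T)
    \<le> CARD('k) * (d * exp (- (p0 / 8 * d)) + T * (C / (d * \<epsilon>\<^sup>2) ^ k))"
proof -
  interpret prob_space M by (rule bandit_env_prob_space[OF env])
  define few where "few a = {\<omega>\<in>space M. ftas_pulls sel pic dflt X U (nat \<lceil>real T powr (1/4)\<rceil>) \<omega> a < d}" for a
  define dev where "dev a = (\<Union>n\<in>{d..T}. {\<omega>\<in>space M. \<epsilon> < \<bar>(\<Sum>i<n. X a i \<omega>) / n - \<theta>$a\<bar>})" for a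
  have d: "1 \<le> d" using root16_floor_bounds(1)[OF T] by (simp add: d_def)
  have [measurable]: "X a i \<in> borel_measurable M" for a i
    by (rule bandit_env_reward_measurable[OF env])
  have sets: "few a \<in> events" "dev a \<in> events" for a
    unfolding few_def dev_def using sets_ftas_pulls[OF env sel, where P="\<lambda>N _. N a < d"] by auto
  have "prob (concentration_failure M sel pic dflt X U \<theta> \<epsilon> T) \<le> prob (\<Union>a. few a \<union> dev a)"
  proof (rule finite_measure_mono)
    show "concentration_failure M sel pic dflt X U \<theta> \<epsilon> T \<subseteq> (\<Union>a. few a \<union> dev a)"
      unfolding few_def dev_def by (rule concentration_failure_subset[OF d])
  qed (use sets in auto)
  also have "\<dots> \<le> (\<Sum>a\<in>UNIV. prob (few a) + prob (dev a))"
    using sets by (intro order.trans[OF finite_measure_subadditive_finite] sum_mono measure_Un_le) auto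
  also have "\<dots> \<le> (\<Sum>a\<in>(UNIV::'k set). d * exp (- (p0 / 8 * d)) + T * (C / (d * \<epsilon>\<^sup>2) ^ k))"
    unfolding few_def dev_def d_def C_def
    by (intro sum_mono add_mono prob_few_pulls_early[OF env ws sel fs T]
        prob_sample_mean_deviation_union[OF env _ \<epsilon>] root16_floor_bounds(1)[OF T])
  finally show ?thesis by simp
qed

lemma failure_bound_eventually_le:
  fixes p0 \<epsilon> \<alpha> K :: real
  assumes p0: "0 < p0" and \<epsilon>: "0 < \<epsilon>" and \<alpha>: "0 < \<alpha>" and K: "0 \<le> K"
    and k: "16 + 16 * \<alpha> < real k"
  defines "C \<equiv> fact (2 * k) / (2 ^ k * fact k)"
    and "d \<equiv> \<lambda>T. nat \<lfloor>real T powr (1/16)\<rfloor>"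
  shows "eventually (\<lambda>T. K * (d T * exp (- (p0 / 8 * d T)) + T * (C / (d T * \<epsilon>\<^sup>2) ^ k))
    \<le> 1 / real T powr \<alpha>) sequentially"
proof -
  define F where "F x = K * (x * exp (- (p0 / 8 * x)) + (2 * x) ^ 16 * (C / (x * \<epsilon>\<^sup>2) powr real k))
    * (2 * x) powr (16 * \<alpha>)" for x
  \<comment> \<open>Since T is at most (2 d T)^16, F (d T) dominates the bound multiplied by T powr \<alpha>.\<close>
  have "(F \<longlongrightarrow> 0) at_top"
    unfolding F_def using p0 \<epsilon> k by real_asymp
  then have "eventually (\<lambda>x. 1 \<le> x \<and> F x < 1) at_top"
    by (intro eventually_conj eventually_ge_at_top order_tendstoD(2)) auto
  then have "eventually (\<lambda>T. 1 \<le> real (d T) \<and> F (d T) < 1) sequentially"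
    unfolding d_def by (rule eventually_compose_filterlim[OF _ filterlim_nat_floor_root16])
  moreover have "eventually (\<lambda>T. 1 \<le> T) sequentially"
    by (rule eventually_ge_at_top)
  ultimately show ?thesis
  proof eventually_elim
    case (elim T)
    then have x: "1 \<le> real (d T)" "F (d T) < 1" and T: "1 \<le> T" by auto
    have "d T = nat \<lfloor>real T powr (1/16)\<rfloor>" by (simp add: d_def)
    note bounds = root16_floor_bounds[OF T, folded this]
    have T_le: "real T \<le> (2 * real (d T)) ^ 16"
      using bounds(4) power_mono[of "real (d T) + 1" "2 * real (d T)" 16] x(1) by simp
    have T_pow: "real T powr \<alpha> \<le> (2 * real (d T)) powr (16 * \<alpha>)"
      using powr_le_powr_of_le_power[OF _ T_le, of \<alpha>] x(1) \<alpha> by simp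
    have "K * (d T * exp (- (p0 / 8 * d T)) + T * (C / (d T * \<epsilon>\<^sup>2) ^ k))
        \<le> K * (d T * exp (- (p0 / 8 * d T)) + (2 * real (d T)) ^ 16 * (C / (d T * \<epsilon>\<^sup>2) powr real k))"
    proof -
      have "(d T * \<epsilon>\<^sup>2) ^ k = (d T * \<epsilon>\<^sup>2) powr real k"
        using x(1) \<epsilon> by (simp add: powr_realpow)
      moreover have "T * (C / (d T * \<epsilon>\<^sup>2) ^ k) \<le> (2 * real (d T)) ^ 16 * (C / (d T * \<epsilon>\<^sup>2) ^ k)"
        by (rule mult_right_mono[OF T_le]) (simp add: C_def)
      ultimately show ?thesis
        using K by (intro mult_left_mono add_left_mono) auto
    qed
    also have "\<dots> = F (d T) / (2 * real (d T)) powr (16 * \<alpha>)"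
      using x(1) by (simp add: F_def)
    also have "\<dots> \<le> 1 / (2 * real (d T)) powr (16 * \<alpha>)"
      using x by (intro divide_right_mono) auto
    also have "\<dots> \<le> 1 / real T powr \<alpha>"
      using T_pow T x(1) by (intro divide_left_mono mult_pos_pos) auto
    finally show ?case .
  qed
qed

lemma prob_concentration_failure_eventually_le:
  fixes \<theta> :: "(real, 'k::{finite,linorder}) vec" and prule :: "(real, 'k) vec \<Rightarrow> (real, 'k) vec"
  assumes fs: "fair_setting prule pic p0 K'" and \<alpha>: "0 < \<alpha>" and \<epsilon>: "0 < \<epsilon>"
  shows "eventually (\<lambda>T. \<forall>(M :: 'w measure) X U sel dflt.
    bandit_env M \<theta> X U \<and> wstar_selection prule sel \<and> sel \<in> borel_measurable borel \<longrightarrow>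
    measure M (concentration_failure M sel pic dflt X U \<theta> \<epsilon> T)
      \<le> 1 / real T powr \<alpha> + 2 * real CARD('k) * real T
        * exp (- 2 * real_of_int \<lfloor>p0 powr (1/4) * real T powr (1/16)
                     / sqrt (ln (1 + real K' * real T powr \<alpha>))\<rfloor> * \<epsilon>\<^sup>2)) sequentially"
proof (cases "p0 = 0")
  case True
  \<comment> \<open>Then the exponential factor is 1 and the bound holds trivially.\<close>
  show ?thesis
    using eventually_ge_at_top[of 1]
  proof eventually_elim
    case (elim T)
    have "measure M S \<le> 2 * real CARD('k) * real T" if "bandit_env M \<theta> X U"
      for M :: "'w measure" and X U S
    proof -
      interpret prob_space M by (rule bandit_env_prob_space[OF that])
      have "1 * 1 \<le> real CARD('k) * real T"
        using elim by (intro mult_mono) auto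
      then show ?thesis using prob_le_1[of S] by linarith
    qed
    with True show ?case
      by (auto intro: add_increasing)
  qed
next
  case False
  then have p0: "0 < p0" using fair_setting_exploration(1)[OF fs] by simp
  \<comment> \<open>With this moment the deviation term T * d^(-k) is o(T^(-\<alpha>)), as d is about T^(1/16).\<close>
  define k where "k = nat \<lceil>16 * \<alpha>\<rceil> + 17"
  have k: "16 + 16 * \<alpha> < real k"
    unfolding k_def using real_nat_ceiling_ge[of "16 * \<alpha>"] by simp
  have K: "0 \<le> real CARD('k)" by simp
  from failure_bound_eventually_le[OF p0 \<epsilon> \<alpha> K k] eventually_ge_at_top[of 1] show ?thesis
  proof eventually_elim
    case (elim T)
    have "measure M (concentration_failure M sel pic dflt X U \<theta> \<epsilon> T) \<le> 1 / real T powr \<alpha>"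
      if "bandit_env M \<theta> X U" "wstar_selection prule sel" "sel \<in> borel_measurable borel"
      for M :: "'w measure" and X U sel dflt
      using order.trans[OF prob_concentration_failure_le[OF that fs \<epsilon> elim(2)] elim(1)] .
    then show ?case by (auto intro: add_increasing2)
  qed
qed

theorem propositionC4:
  fixes \<theta> :: "(real, 'k::{finite,linorder}) vec"
    and prule :: "(real, 'k) vec \<Rightarrow> (real, 'k) vec" and pic :: "(real, 'k) vec"
    and p0 :: real and K' :: nat and \<alpha> \<epsilon> :: real
  assumes "unique_best \<theta>"
    and "fair_setting prule pic p0 K'"
    and "\<alpha> > 0" and "\<epsilon> > 0"
  shows "\<exists>B>0. \<forall>(M :: 'w measure) X U sel dflt.
           bandit_env M \<theta> X U \<and> wstar_selection prule sel \<and> sel \<in> borel_measurable borel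
           \<longrightarrow> (\<forall>T::nat. T \<ge> 1 \<longrightarrow>
                 measure M {\<omega> \<in> space M. \<not> (\<forall>t\<in>{nat \<lceil>real T powr (1/4)\<rceil>..T}.
                     sup_norm (ftas_emp sel pic dflt X U \<omega> t - \<theta>) \<le> \<epsilon>)}
                 \<le> 1 / real T powr \<alpha>
                   + 2 * B * real CARD('k) * real T
                     * exp (- 2 * real_of_int \<lfloor>p0 powr (1/4) * real T powr (1/16)
                                  / sqrt (ln (1 + real K' * real T powr \<alpha>))\<rfloor> * \<epsilon>\<^sup>2))"
proof -
  define h where "h T = 2 * real CARD('k) * real T * exp (- 2 * real_of_int \<lfloor>p0 powr (1/4)
    * real T powr (1/16) / sqrt (ln (1 + real K' * real T powr \<alpha>))\<rfloor> * \<epsilon>\<^sup>2)" for T :: nat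
  obtain T0 where T0: "\<And>T (M :: 'w measure) X U sel dflt. T0 \<le> T \<Longrightarrow> bandit_env M \<theta> X U \<Longrightarrow>
      wstar_selection prule sel \<Longrightarrow> sel \<in> borel_measurable borel \<Longrightarrow>
      measure M (concentration_failure M sel pic dflt X U \<theta> \<epsilon> T) \<le> 1 / real T powr \<alpha> + h T"
    using prob_concentration_failure_eventually_le[OF assms(2-4)]
    unfolding eventually_sequentially h_def by blast
  have h_pos: "0 < h T" if "1 \<le> T" for T
    using that by (simp add: h_def)
  obtain B where B: "1 \<le> B" "\<And>T. 1 \<le> T \<Longrightarrow> T < T0 \<Longrightarrow> 1 \<le> B * h T"
    using bound_absorb_initial_segment[of h T0, OF h_pos] by blast
  have "measure M (concentration_failure M sel pic dflt X U \<theta> \<epsilon> T) \<le> 1 / real T powr \<alpha> + B * h T"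
    if env: "bandit_env M \<theta> X U" and "wstar_selection prule sel" "sel \<in> borel_measurable borel"
      and T: "1 \<le> T" for M :: "'w measure" and X U sel dflt T
  proof (cases "T0 \<le> T")
    case True
    have "h T \<le> B * h T" using B(1) h_pos[OF T] by simp
    then show ?thesis using T0[OF True that(1-3), where dflt=dflt] by linarith
  next
    case False
    interpret prob_space M by (rule bandit_env_prob_space[OF env])
    have "prob (concentration_failure M sel pic dflt X U \<theta> \<epsilon> T) \<le> 1"
      by (rule prob_le_1)
    also have "1 \<le> B * h T"
      using B(2)[OF T] False by simp
    finally show ?thesis
      by (simp add: add_increasing)
  qed
  with B(1) show ?thesis
    by (intro exI[of _ B]) (auto simp: concentration_failure_def h_def mult_ac)
qed

end
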